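(* For all problems $f,g$: if $f\times\mathsf C_2\le_W\overline g$, then $f\le_W g$. Likewise, if $f\times\mathsf C_2\le_{sW}\overline g$, then $f\le_{sW}g$.
   Context: A problem $f:\subseteq X\rightrightarrows Y$ between represented spaces (sets with surjective partial $\delta:\subseteq\mathbb N^\mathbb N\to X$) is a partial multi-valued map with nonempty values on its domain; $F\vdash f$ means $\delta_YF(p)\in f(\delta_X(p))$ whenever $\delta_X(p)\in\mathrm{dom}(f)$. $f\le_W g$ iff there are computable partial $H,K$ with $H\langle\mathrm{id},GK\rangle\vdash f$ for all $G\vdash g$; $f\le_{sW}g$ iff there are computable $H,K$ with $HGK\vdash f$ for all $G\vdash g$. The product $f\times g$ maps $(x,u)\mapsto f(x)\times g(u)$ on $\mathrm{dom}(f)\times\mathrm{dom}(g)$. $\mathsf C_2:\subseteq\mathcal A_-(\{0,1\})\rightrightarrows\{0,1\}$, $A\mapsto A$ on nonempty $A$, where subsets of $\{0,1\}$ are given by negative information (an enumeration of the complement). For $p\in\mathbb{N}^\mathbb{N}$, $p-1$ is the concatenation of $p(0)-1,p(1)-1,\dots$ with $0-1$ the empty word; the completion of $(X,\delta_X)$ is $\overline X=X\cup\{\bot\}$ with $\delta_{\overline X}(p)=\delta_X(p-1)$ if $p-1$ is an infinite sequence in $\mathrm{dom}(\delta_X)$, $\bot$ otherwise; $\overline g:\overline U\rightrightarrows\overline V$ equals $g$ on $\mathrm{dom}(g)$ and $\overline V$ elsewhere. *)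

theory Defs
  imports Main "HOL-Library.Nat_Bijection" "HOL-Library.Infinite_Set"
begin

datatype prim_rec_term = PZ | PS | PProj nat | PComp prim_rec_term "prim_rec_term list" | PRec prim_rec_term prim_rec_term

definition arg :: "nat \<Rightarrow> nat list \<Rightarrow> nat" where
  "arg i xs = (if i < length xs then xs ! i else 0)"

primrec peval :: "prim_rec_term \<Rightarrow> nat list \<Rightarrow> nat" where
  "peval PZ xs = 0"
| "peval PS xs = Suc (arg 0 xs)"
| "peval (PProj i) xs = arg i xs"
| "peval (PComp f gs) xs = peval f (map (\<lambda>g. peval g xs) gs)"
| "peval (PRec f g) xs =
     (case xs of [] \<Rightarrow> peval f []
      | y # ys \<Rightarrow> rec_nat (peval f ys) (\<lambda>n r. peval g (n # r # ys)) y)"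

type_synonym baire = "nat \<Rightarrow> nat"

definition prefix_code :: "baire \<Rightarrow> nat \<Rightarrow> nat" where
  "prefix_code p k = list_encode (map p [0..<k])"

text \<open>A machine is given by a primitive recursive M: on input (n, code of p|k),
  M returns 0 ("no answer yet") or m+1 ("the n-th output symbol is m").\<close>
definition answers :: "prim_rec_term \<Rightarrow> baire \<Rightarrow> nat \<Rightarrow> nat \<Rightarrow> bool" where
  "answers M p n k \<longleftrightarrow> 0 < peval M [n, prefix_code p k]"

definition machine_total_on :: "prim_rec_term \<Rightarrow> baire \<Rightarrow> bool" where
  "machine_total_on M p \<longleftrightarrow> (\<forall>n. \<exists>k. answers M p n k)"

definition machine_out :: "prim_rec_term \<Rightarrow> baire \<Rightarrow> baire" where
  "machine_out M p = (\<lambda>n. peval M [n, prefix_code p (LEAST k. answers M p n k)] - 1)"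

text \<open>Partial functions on Baire space are modelled as option-valued functions.
  F is computable iff some machine computes F(p) for every p in dom F.\<close>
definition computable :: "(baire \<Rightarrow> baire option) \<Rightarrow> bool" where
  "computable F \<longleftrightarrow> (\<exists>M. \<forall>p q. F p = Some q \<longrightarrow> machine_total_on M p \<and> q = machine_out M p)"

definition pairB :: "baire \<Rightarrow> baire \<Rightarrow> baire" where
  "pairB p q = (\<lambda>n. if even n then p (n div 2) else q (n div 2))"

definition representation :: "(baire \<Rightarrow> 'a option) \<Rightarrow> bool" where
  "representation \<delta> \<longleftrightarrow> (\<forall>x. \<exists>p. \<delta> p = Some x)"

text \<open>A problem f : X \<rightrightarrows> Y is a function 'x \<Rightarrow> 'y set; dom f = {x. f x \<noteq> {}}.\<close>

definition realizes :: "(baire \<Rightarrow> baire option) \<Rightarrow> (baire \<Rightarrow> 'x option) \<Rightarrow> (baire \<Rightarrow> 'y option)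
    \<Rightarrow> ('x \<Rightarrow> 'y set) \<Rightarrow> bool" where
  "realizes F \<delta>X \<delta>Y f \<longleftrightarrow>
     (\<forall>p x. \<delta>X p = Some x \<and> f x \<noteq> {} \<longrightarrow> (\<exists>q y. F p = Some q \<and> \<delta>Y q = Some y \<and> y \<in> f x))"

definition obind :: "'a option \<Rightarrow> ('a \<Rightarrow> 'b option) \<Rightarrow> 'b option" where
  "obind a h = (case a of None \<Rightarrow> None | Some x \<Rightarrow> h x)"

definition weihrauch_le ::
  "(baire \<Rightarrow> 'x option) \<Rightarrow> (baire \<Rightarrow> 'y option) \<Rightarrow> ('x \<Rightarrow> 'y set) \<Rightarrow>
   (baire \<Rightarrow> 'u option) \<Rightarrow> (baire \<Rightarrow> 'v option) \<Rightarrow> ('u \<Rightarrow> 'v set) \<Rightarrow> bool" where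
  "weihrauch_le \<delta>X \<delta>Y f \<delta>U \<delta>V g \<longleftrightarrow>
     (\<exists>H K. computable H \<and> computable K \<and>
        (\<forall>G. realizes G \<delta>U \<delta>V g \<longrightarrow>
           realizes (\<lambda>p. obind (K p) (\<lambda>q. obind (G q) (\<lambda>r. H (pairB p r)))) \<delta>X \<delta>Y f))"

definition strong_weihrauch_le ::
  "(baire \<Rightarrow> 'x option) \<Rightarrow> (baire \<Rightarrow> 'y option) \<Rightarrow> ('x \<Rightarrow> 'y set) \<Rightarrow>
   (baire \<Rightarrow> 'u option) \<Rightarrow> (baire \<Rightarrow> 'v option) \<Rightarrow> ('u \<Rightarrow> 'v set) \<Rightarrow> bool" where
  "strong_weihrauch_le \<delta>X \<delta>Y f \<delta>U \<delta>V g \<longleftrightarrow>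
     (\<exists>H K. computable H \<and> computable K \<and>
        (\<forall>G. realizes G \<delta>U \<delta>V g \<longrightarrow>
           realizes (\<lambda>p. obind (K p) (\<lambda>q. obind (G q) H)) \<delta>X \<delta>Y f))"

definition prod_rep :: "(baire \<Rightarrow> 'a option) \<Rightarrow> (baire \<Rightarrow> 'b option) \<Rightarrow> baire \<Rightarrow> ('a \<times> 'b) option" where
  "prod_rep \<delta>1 \<delta>2 r =
     (case (\<delta>1 (\<lambda>n. r (2 * n)), \<delta>2 (\<lambda>n. r (2 * n + 1))) of
        (Some x, Some y) \<Rightarrow> Some (x, y) | _ \<Rightarrow> None)"

definition prob_prod :: "('x \<Rightarrow> 'y set) \<Rightarrow> ('u \<Rightarrow> 'v set) \<Rightarrow> ('x \<times> 'u) \<Rightarrow> ('y \<times> 'v) set" where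
  "prob_prod f g = (\<lambda>(x, u). f x \<times> g u)"

text \<open>{0,1} is modelled by bool (False = 0, True = 1), represented by p \<mapsto> p(0).\<close>
definition rep_two :: "baire \<Rightarrow> bool option" where
  "rep_two p = (if p 0 = 0 then Some False else if p 0 = 1 then Some True else None)"

text \<open>Negative information: p enumerates the complement, value b+1 meaning "b is not in A",
  value 0 meaning nothing.\<close>
definition rep_neg_two :: "baire \<Rightarrow> bool set option" where
  "rep_neg_two p = (if (\<forall>n. p n \<le> 2)
      then Some {b. \<forall>n. p n \<noteq> (if b then 2 else 1)} else None)"

definition C2 :: "bool set \<Rightarrow> bool set" where
  "C2 A = A"

text \<open>p - 1: delete zeros and subtract 1 from the remaining entries.\<close>
definition minus_one_infinite :: "baire \<Rightarrow> bool" where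
  "minus_one_infinite p \<longleftrightarrow> infinite {n. 0 < p n}"

definition minus_one :: "baire \<Rightarrow> baire" where
  "minus_one p = (\<lambda>k. p (enumerate {n. 0 < p n} k) - 1)"

text \<open>Completion of a represented space: the type 'a option, None playing the role of \<bottom>.\<close>
definition compl_rep :: "(baire \<Rightarrow> 'a option) \<Rightarrow> baire \<Rightarrow> 'a option option" where
  "compl_rep \<delta> p =
     (if minus_one_infinite p then
        (case \<delta> (minus_one p) of Some x \<Rightarrow> Some (Some x) | None \<Rightarrow> Some None)
      else Some None)"

definition completion :: "('u \<Rightarrow> 'v set) \<Rightarrow> 'u option \<Rightarrow> 'v option set" where
  "completion g x =
     (case x of Some u \<Rightarrow> (if g u \<noteq> {} then Some ` g u else UNIV) | None \<Rightarrow> UNIV)"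

end

theory Submission
  imports Defs
begin

text \<open>Let \<open>K, H\<close> witness \<open>f \<times> C\<^sub>2 \<le>\<^sub>W g\<close> completed. Given a name \<open>p\<close> of an instance of \<open>f\<close>,
  feed \<open>K\<close> with \<open>p\<close> and a negative name \<open>Q\<close> of a subset of \<open>{0, 1}\<close> that stays all zeros (naming
  \<open>{0, 1}\<close>) until \<open>H\<close>, run on \<open>p\<close>, the all-zero \<open>C\<^sub>2\<close>-name and the answer \<open>\<bottom>\<close>, writes its
  \<open>C\<^sub>2\<close>-bit \<open>b\<close>, and then removes \<open>b\<close>. Up to that moment \<open>Q\<close> agrees with the all-zero name, so
  \<open>H\<close>, given the answer \<open>\<bottom>\<close> on the actual input, writes the same excluded bit. Hence \<open>\<bottom>\<close> is no
  correct answer to the instance that \<open>K\<close> produces: it names an element of the domain of \<open>g\<close>, a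
  realizer of \<open>g\<close> solves it, and \<open>H\<close> turns the solution into one for \<open>f\<close>.\<close>

section \<open>Primitive recursive functions\<close>

definition prim_rec :: "(nat list \<Rightarrow> nat) \<Rightarrow> bool" where
  "prim_rec f \<longleftrightarrow> (\<exists>t. peval t = f)"

lemma arg_Cons_0 [simp]: "arg 0 (x # xs) = x"
  by (simp add: arg_def)

lemma arg_Cons_Suc [simp]: "arg (Suc i) (x # xs) = arg i xs"
  by (simp add: arg_def)

lemma arg_Cons_numeral [simp]: "arg (numeral k) (x # xs) = arg (pred_numeral k) xs"
  by (simp add: numeral_eq_Suc)

lemma arg_tl: "arg i (tl xs) = arg (Suc i) xs"
  by (cases xs) (auto simp: arg_def)

lemma prim_rec_arg: "prim_rec (\<lambda>xs. arg i xs)"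
  unfolding prim_rec_def by (rule exI[of _ "PProj i"]) auto

lemma prim_rec_zero: "prim_rec (\<lambda>xs. 0)"
  unfolding prim_rec_def by (rule exI[of _ PZ]) auto

lemma prim_rec_compose:
  assumes "prim_rec h" and "list_all prim_rec gs"
  shows "prim_rec (\<lambda>xs. h (map (\<lambda>g. g xs) gs))"
proof -
  obtain th where th: "peval th = h"
    using assms(1) unfolding prim_rec_def by blast
  have "\<exists>ts. map peval ts = gs"
    using assms(2) by (induction gs) (auto simp: prim_rec_def intro: exI[of _ "_ # _"])
  then obtain ts where "map peval ts = gs" ..
  then have "peval (PComp th ts) = (\<lambda>xs. h (map (\<lambda>g. g xs) gs))"
    by (auto simp: th comp_def)
  then show ?thesis unfolding prim_rec_def by blast
qed

lemma prim_rec_Suc: "prim_rec a \<Longrightarrow> prim_rec (\<lambda>xs. Suc (a xs))"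
proof -
  assume "prim_rec a"
  have "prim_rec (\<lambda>xs. Suc (arg 0 xs))"
    unfolding prim_rec_def by (rule exI[of _ PS]) auto
  from prim_rec_compose[OF this, of "[a]"] show ?thesis using \<open>prim_rec a\<close> by simp
qed

lemma prim_rec_const: "prim_rec (\<lambda>xs. k)"
  by (induction k) (auto intro: prim_rec_zero prim_rec_Suc)

lemma prim_rec_rec_nat:
  assumes "prim_rec f" and "prim_rec g"
  shows "prim_rec (\<lambda>xs. rec_nat (f (tl xs)) (\<lambda>n r. g (n # r # tl xs)) (arg 0 xs))"
proof -
  obtain tf tg where "peval tf = f" "peval tg = g"
    using assms unfolding prim_rec_def by blast
  then have "peval (PRec tf tg) xs = rec_nat (f (tl xs)) (\<lambda>n r. g (n # r # tl xs)) (arg 0 xs)"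
    for xs
    by (cases xs) (auto simp: arg_def)
  then show ?thesis unfolding prim_rec_def by blast
qed

lemma prim_rec_cong: "prim_rec f \<Longrightarrow> (\<And>xs. f xs = g xs) \<Longrightarrow> prim_rec g"
  by (metis ext)

definition prim_rec1 :: "(nat \<Rightarrow> nat) \<Rightarrow> bool" where
  "prim_rec1 f \<longleftrightarrow> prim_rec (\<lambda>xs. f (arg 0 xs))"

definition prim_rec2 :: "(nat \<Rightarrow> nat \<Rightarrow> nat) \<Rightarrow> bool" where
  "prim_rec2 f \<longleftrightarrow> prim_rec (\<lambda>xs. f (arg 0 xs) (arg 1 xs))"

definition prim_rec3 :: "(nat \<Rightarrow> nat \<Rightarrow> nat \<Rightarrow> nat) \<Rightarrow> bool" where
  "prim_rec3 f \<longleftrightarrow> prim_rec (\<lambda>xs. f (arg 0 xs) (arg 1 xs) (arg 2 xs))"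

definition prim_rec4 :: "(nat \<Rightarrow> nat \<Rightarrow> nat \<Rightarrow> nat \<Rightarrow> nat) \<Rightarrow> bool" where
  "prim_rec4 f \<longleftrightarrow> prim_rec (\<lambda>xs. f (arg 0 xs) (arg 1 xs) (arg 2 xs) (arg 3 xs))"

definition prim_rec5 :: "(nat \<Rightarrow> nat \<Rightarrow> nat \<Rightarrow> nat \<Rightarrow> nat \<Rightarrow> nat) \<Rightarrow> bool" where
  "prim_rec5 f \<longleftrightarrow> prim_rec (\<lambda>xs. f (arg 0 xs) (arg 1 xs) (arg 2 xs) (arg 3 xs) (arg 4 xs))"

lemmas prim_recI = prim_rec1_def[THEN iffD2] prim_rec2_def[THEN iffD2] prim_rec3_def[THEN iffD2]
  prim_rec4_def[THEN iffD2] prim_rec5_def[THEN iffD2]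

lemma prim_rec1_apply: "prim_rec1 h \<Longrightarrow> prim_rec a \<Longrightarrow> prim_rec (\<lambda>xs. h (a xs))"
  unfolding prim_rec1_def using prim_rec_compose[of "\<lambda>xs. h (arg 0 xs)" "[a]"] by simp

lemma prim_rec2_apply:
  "prim_rec2 h \<Longrightarrow> prim_rec a \<Longrightarrow> prim_rec b \<Longrightarrow> prim_rec (\<lambda>xs. h (a xs) (b xs))"
  unfolding prim_rec2_def using prim_rec_compose[of "\<lambda>xs. h (arg 0 xs) (arg 1 xs)" "[a, b]"]
  by simp

lemma prim_rec3_apply:
  "prim_rec3 h \<Longrightarrow> prim_rec a \<Longrightarrow> prim_rec b \<Longrightarrow> prim_rec c \<Longrightarrow>
    prim_rec (\<lambda>xs. h (a xs) (b xs) (c xs))"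
  unfolding prim_rec3_def
  using prim_rec_compose[of "\<lambda>xs. h (arg 0 xs) (arg 1 xs) (arg 2 xs)" "[a, b, c]"] by simp

lemma prim_rec4_apply:
  "prim_rec4 h \<Longrightarrow> prim_rec a \<Longrightarrow> prim_rec b \<Longrightarrow> prim_rec c \<Longrightarrow> prim_rec d \<Longrightarrow>
    prim_rec (\<lambda>xs. h (a xs) (b xs) (c xs) (d xs))"
  unfolding prim_rec4_def
  using prim_rec_compose[of "\<lambda>xs. h (arg 0 xs) (arg 1 xs) (arg 2 xs) (arg 3 xs)" "[a, b, c, d]"]
  by simp

lemma prim_rec4_rec_nat:
  assumes "prim_rec3 base" and "prim_rec5 step"
  shows "prim_rec4 (\<lambda>y a b c. rec_nat (base a b c) (\<lambda>n r. step n r a b c) y)"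
  using prim_rec_rec_nat[OF assms[unfolded prim_rec3_def prim_rec5_def]]
  unfolding prim_rec4_def by (simp add: arg_tl numeral_2_eq_2 numeral_3_eq_3)

lemma prim_rec_rec_nat3:
  assumes "prim_rec3 base" and "prim_rec5 step"
    and "prim_rec y" and "prim_rec a" and "prim_rec b" and "prim_rec c"
  shows "prim_rec (\<lambda>xs.
    rec_nat (base (a xs) (b xs) (c xs)) (\<lambda>n r. step n r (a xs) (b xs) (c xs)) (y xs))"
  using prim_rec4_apply[OF prim_rec4_rec_nat[OF assms(1,2)] assms(3-)] .

lemma prim_rec_add:
  assumes "prim_rec a" and "prim_rec b"
  shows "prim_rec (\<lambda>xs. a xs + b xs)"
proof -
  have "prim_rec3 (\<lambda>a b c. a)" "prim_rec5 (\<lambda>n r a b c. Suc r)"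
    by (intro prim_recI prim_rec_Suc prim_rec_arg)+
  from prim_rec_rec_nat3[OF this assms(2,1) prim_rec_zero prim_rec_zero]
  have "prim_rec (\<lambda>xs. rec_nat (a xs) (\<lambda>n r. Suc r) (b xs))" .
  moreover have "rec_nat a (\<lambda>n r. Suc r) y = a + y" for a y :: nat
    by (induction y) auto
  ultimately show ?thesis by simp
qed

lemma prim_rec_mult:
  assumes "prim_rec a" and "prim_rec b"
  shows "prim_rec (\<lambda>xs. a xs * b xs)"
proof -
  have "prim_rec3 (\<lambda>a b c. 0)" "prim_rec5 (\<lambda>n r a b c. r + a)"
    by (intro prim_recI prim_rec_add prim_rec_arg prim_rec_const)+
  from prim_rec_rec_nat3[OF this assms(2,1) prim_rec_zero prim_rec_zero]
  have "prim_rec (\<lambda>xs. rec_nat 0 (\<lambda>n r. r + a xs) (b xs))" .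
  moreover have "rec_nat 0 (\<lambda>n r. r + a) y = a * y" for a y :: nat
    by (induction y) auto
  ultimately show ?thesis by simp
qed

lemma prim_rec_minus_one:
  assumes "prim_rec a"
  shows "prim_rec (\<lambda>xs. a xs - 1)"
proof -
  have "prim_rec3 (\<lambda>a b c. 0)" "prim_rec5 (\<lambda>n r a b c. n)"
    by (intro prim_recI prim_rec_arg prim_rec_const)+
  from prim_rec_rec_nat3[OF this assms prim_rec_zero prim_rec_zero prim_rec_zero]
  have "prim_rec (\<lambda>xs. rec_nat 0 (\<lambda>n r. n) (a xs))" .
  moreover have "rec_nat 0 (\<lambda>n r. n) y = y - 1" for y :: nat
    by (cases y) auto
  ultimately show ?thesis by simp
qed

lemma prim_rec_diff:
  assumes "prim_rec a" and "prim_rec b"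
  shows "prim_rec (\<lambda>xs. a xs - b xs)"
proof -
  have "prim_rec3 (\<lambda>a b c. a)" "prim_rec5 (\<lambda>n r a b c. r - 1)"
    by (intro prim_recI prim_rec_minus_one prim_rec_arg)+
  from prim_rec_rec_nat3[OF this assms(2,1) prim_rec_zero prim_rec_zero]
  have "prim_rec (\<lambda>xs. rec_nat (a xs) (\<lambda>n r. r - 1) (b xs))" .
  moreover have "rec_nat a (\<lambda>n r. r - 1) y = a - y" for a y :: nat
    by (induction y) auto
  ultimately show ?thesis by simp
qed

lemma prim_rec_if_zero:
  assumes "prim_rec c" and "prim_rec a" and "prim_rec b"
  shows "prim_rec (\<lambda>xs. if c xs = 0 then a xs else b xs)"
proof -
  have "prim_rec3 (\<lambda>a b c. a)" "prim_rec5 (\<lambda>n r a b c. b)"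
    by (intro prim_recI prim_rec_arg)+
  from prim_rec_rec_nat3[OF this assms prim_rec_zero]
  have "prim_rec (\<lambda>xs. rec_nat (a xs) (\<lambda>n r. b xs) (c xs))" .
  moreover have "rec_nat a (\<lambda>n r. b) y = (if y = 0 then a else b)" for a b y :: nat
    by (cases y) auto
  ultimately show ?thesis by simp
qed

definition prim_rec_pred :: "(nat list \<Rightarrow> bool) \<Rightarrow> bool" where
  "prim_rec_pred P \<longleftrightarrow> prim_rec (\<lambda>xs. if P xs then 1 else 0)"

lemma prim_rec_if:
  assumes "prim_rec_pred P" and "prim_rec a" and "prim_rec b"
  shows "prim_rec (\<lambda>xs. if P xs then a xs else b xs)"
  by (rule prim_rec_cong[OF prim_rec_if_zero[OF assms(1)[unfolded prim_rec_pred_def] assms(3,2)]])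
    auto

lemma prim_rec_pred_le:
  assumes "prim_rec a" and "prim_rec b"
  shows "prim_rec_pred (\<lambda>xs. a xs \<le> b xs)"
  unfolding prim_rec_pred_def
  by (rule prim_rec_cong[OF prim_rec_diff[OF prim_rec_const prim_rec_diff[OF assms]], of 1]) auto

lemma prim_rec_pred_less:
  assumes "prim_rec a" and "prim_rec b"
  shows "prim_rec_pred (\<lambda>xs. a xs < b xs)"
  using prim_rec_pred_le[OF prim_rec_Suc[OF assms(1)] assms(2)] by (simp add: Suc_le_eq)

lemma prim_rec_pred_conj:
  assumes "prim_rec_pred P" and "prim_rec_pred Q"
  shows "prim_rec_pred (\<lambda>xs. P xs \<and> Q xs)"
  unfolding prim_rec_pred_def
  by (rule prim_rec_cong[OF prim_rec_mult[OF assms[unfolded prim_rec_pred_def]]]) auto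

lemma prim_rec_pred_eq:
  assumes "prim_rec a" and "prim_rec b"
  shows "prim_rec_pred (\<lambda>xs. a xs = b xs)"
  using prim_rec_pred_conj[OF prim_rec_pred_le[OF assms] prim_rec_pred_le[OF assms(2,1)]]
  by (simp add: order_eq_iff)

definition prim_rec_pred4 :: "(nat \<Rightarrow> nat \<Rightarrow> nat \<Rightarrow> nat \<Rightarrow> bool) \<Rightarrow> bool" where
  "prim_rec_pred4 P \<longleftrightarrow> prim_rec_pred (\<lambda>xs. P (arg 0 xs) (arg 1 xs) (arg 2 xs) (arg 3 xs))"

lemmas prim_rec_pred4I = prim_rec_pred4_def[THEN iffD2]

lemma prim_rec_pred4_apply:
  "prim_rec_pred4 P \<Longrightarrow> prim_rec a \<Longrightarrow> prim_rec b \<Longrightarrow> prim_rec c \<Longrightarrow> prim_rec d \<Longrightarrow>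
    prim_rec_pred (\<lambda>xs. P (a xs) (b xs) (c xs) (d xs))"
  unfolding prim_rec_pred4_def prim_rec_pred_def
  using prim_rec4_apply[of "\<lambda>k a b c. if P k a b c then 1 else 0" a b c d]
  by (simp add: prim_rec4_def)

lemma prim_rec_div2:
  assumes "prim_rec a"
  shows "prim_rec (\<lambda>xs. a xs div 2)"
proof -
  have "prim_rec3 (\<lambda>a b c. 0)" "prim_rec5 (\<lambda>n r a b c. if Suc n = 2 * Suc r then Suc r else r)"
    by (intro prim_recI prim_rec_if prim_rec_pred_eq prim_rec_mult prim_rec_Suc prim_rec_arg
        prim_rec_const)+
  from prim_rec_rec_nat3[OF this assms prim_rec_zero prim_rec_zero prim_rec_zero]
  have "prim_rec (\<lambda>xs. rec_nat 0 (\<lambda>n r. if Suc n = 2 * Suc r then Suc r else r) (a xs))" .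
  moreover have "rec_nat 0 (\<lambda>n r. if Suc n = 2 * Suc r then Suc r else r) y = y div 2" for y
    by (induction y) auto
  ultimately show ?thesis by simp
qed

lemma prim_rec_pred_even:
  assumes "prim_rec a"
  shows "prim_rec_pred (\<lambda>xs. even (a xs))"
proof -
  have "prim_rec_pred (\<lambda>xs. a xs = 2 * (a xs div 2))"
    by (intro prim_rec_pred_eq prim_rec_mult prim_rec_div2 prim_rec_const assms)
  moreover have "(n::nat) = 2 * (n div 2) \<longleftrightarrow> even n" for n
    by presburger
  ultimately show ?thesis by simp
qed

primrec bounded_least :: "(nat \<Rightarrow> bool) \<Rightarrow> nat \<Rightarrow> nat" where
  "bounded_least P 0 = 0"
| "bounded_least P (Suc b) =
    (if bounded_least P b < b then bounded_least P b else if P b then b else Suc b)"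

lemma bounded_least_eq: "bounded_least P b = (if \<exists>i<b. P i then (LEAST i. P i) else b)"
proof (induction b)
  case (Suc b)
  show ?case
  proof (cases "\<exists>i<b. P i")
    case True
    then have "(LEAST i. P i) < b"
      by (meson LeastI_ex Least_le le_less_trans not_less)
    with Suc True show ?thesis
      by (auto simp: bounded_least.simps intro: less_SucI)
  next
    case False
    then have "(LEAST i. P i) = b" if "P b"
      using that by (metis Least_equality not_less)
    with Suc False show ?thesis
      by (auto simp: bounded_least.simps less_Suc_eq)
  qed
qed simp

declare bounded_least.simps(2) [simp del]

lemma bounded_least_less_iff: "bounded_least P b < b \<longleftrightarrow> (\<exists>i<b. P i)"
  by (auto simp: bounded_least_eq intro: Least_le le_less_trans)

lemma bounded_least_holds: "bounded_least P b < b \<Longrightarrow> P (bounded_least P b)"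
  by (auto simp: bounded_least_eq split: if_splits intro: LeastI)

lemma not_less_bounded_least: "i < bounded_least P b \<Longrightarrow> \<not> P i"
  by (auto simp: bounded_least_eq split: if_splits dest: not_less_Least)

lemma bounded_least_eq_Least: "bounded_least P b < b \<Longrightarrow> bounded_least P b = (LEAST i. P i)"
  by (auto simp: bounded_least_eq split: if_splits)

lemma bounded_least_cong: "(\<And>i. i < b \<Longrightarrow> P i \<longleftrightarrow> Q i) \<Longrightarrow> bounded_least P b = bounded_least Q b"
  by (induction b) (auto simp: bounded_least.simps)

lemma prim_rec_bounded_least:
  assumes "prim_rec_pred4 P"
    and "prim_rec y" and "prim_rec a" and "prim_rec b" and "prim_rec c"
  shows "prim_rec (\<lambda>xs. bounded_least (\<lambda>k. P k (a xs) (b xs) (c xs)) (y xs))"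
proof -
  have "prim_rec3 (\<lambda>a b c. 0)"
    and "prim_rec5 (\<lambda>n r a b c. if r < n then r else if P n a b c then n else Suc n)"
    by (intro prim_recI prim_rec_if prim_rec_pred_less prim_rec_pred4_apply[OF assms(1)]
        prim_rec_arg prim_rec_Suc prim_rec_const)+
  from prim_rec_rec_nat3[OF this assms(2-)]
  have "prim_rec (\<lambda>xs. rec_nat 0
    (\<lambda>n r. if r < n then r else if P n (a xs) (b xs) (c xs) then n else Suc n) (y xs))" .
  moreover have "bounded_least Q y =
      rec_nat 0 (\<lambda>n r. if r < n then r else if Q n then n else Suc n) y" for Q y
    by (induction y) (auto simp: bounded_least.simps)
  ultimately show ?thesis by simp
qed

section \<open>Coding of finite sequences\<close>

lemma prim_rec_triangle:
  assumes "prim_rec a"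
  shows "prim_rec (\<lambda>xs. triangle (a xs))"
proof -
  have "prim_rec3 (\<lambda>a b c. 0)" "prim_rec5 (\<lambda>n r a b c. r + Suc n)"
    by (intro prim_recI prim_rec_add prim_rec_Suc prim_rec_arg prim_rec_const)+
  from prim_rec_rec_nat3[OF this assms prim_rec_zero prim_rec_zero prim_rec_zero]
  have "prim_rec (\<lambda>xs. rec_nat 0 (\<lambda>n r. r + Suc n) (a xs))" .
  moreover have "rec_nat 0 (\<lambda>n r. r + Suc n) y = triangle y" for y
    by (induction y) auto
  ultimately show ?thesis by simp
qed

lemma prim_rec_prod_encode:
  assumes "prim_rec a" and "prim_rec b"
  shows "prim_rec (\<lambda>xs. prod_encode (a xs, b xs))"
  using assms unfolding prod_encode_def by (simp; intro prim_rec_add prim_rec_triangle)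

text \<open>The diagonal of the Cantor pairing on which the code \<open>m\<close> lies.\<close>

definition prod_diagonal :: "nat \<Rightarrow> nat" where
  "prod_diagonal m = bounded_least (\<lambda>s. m < triangle (Suc s)) (Suc m)"

lemma prod_decode_by_diagonal:
  "prod_decode m =
    (m - triangle (prod_diagonal m), prod_diagonal m - (m - triangle (prod_diagonal m)))"
proof -
  let ?s = "prod_diagonal m"
  have "m < triangle (Suc m)"
    by (induction m) auto
  then have below: "?s < Suc m"
    unfolding prod_diagonal_def by (auto simp: bounded_least_less_iff)
  then have upper: "m < triangle (Suc ?s)"
    unfolding prod_diagonal_def by (rule bounded_least_holds)
  have lower: "triangle ?s \<le> m"
  proof (cases ?s)
    case (Suc t)
    then have "\<not> m < triangle (Suc t)"
      using not_less_bounded_least[of t "\<lambda>s. m < triangle (Suc s)" "Suc m"]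
      unfolding prod_diagonal_def by simp
    with Suc show ?thesis by simp
  qed simp
  have "prod_encode (m - triangle ?s, ?s - (m - triangle ?s)) = m"
    using upper lower by (simp add: prod_encode_def)
  then show ?thesis by (metis prod_encode_inverse)
qed

lemma prim_rec_prod_diagonal:
  assumes "prim_rec a"
  shows "prim_rec (\<lambda>xs. prod_diagonal (a xs))"
proof -
  have "prim_rec_pred4 (\<lambda>s m b c. m < triangle (Suc s))"
    by (intro prim_rec_pred4I prim_rec_pred_less prim_rec_arg prim_rec_triangle prim_rec_Suc)
  from prim_rec_bounded_least[OF this prim_rec_Suc[OF assms] assms prim_rec_zero prim_rec_zero]
  show ?thesis
    unfolding prod_diagonal_def .
qed

lemma prim_rec_prod_decode:
  assumes "prim_rec a"
  shows "prim_rec (\<lambda>xs. fst (prod_decode (a xs)))" "prim_rec (\<lambda>xs. snd (prod_decode (a xs)))"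
  unfolding prod_decode_by_diagonal fst_conv snd_conv
  by (intro prim_rec_diff prim_rec_triangle prim_rec_prod_diagonal assms)+

text \<open>\<open>list_encode\<close> codes \<open>x # xs\<close> as \<open>Suc (prod_encode (x, list_encode xs))\<close>.\<close>

definition code_hd :: "nat \<Rightarrow> nat" where
  "code_hd c = fst (prod_decode (c - 1))"

definition code_tl :: "nat \<Rightarrow> nat" where
  "code_tl c = (if c = 0 then 0 else snd (prod_decode (c - 1)))"

definition code_drop :: "nat \<Rightarrow> nat \<Rightarrow> nat" where
  "code_drop i c = (code_tl ^^ i) c"

definition code_nth :: "nat \<Rightarrow> nat \<Rightarrow> nat" where
  "code_nth c i = code_hd (code_drop i c)"

definition code_length :: "nat \<Rightarrow> nat" where
  "code_length c = bounded_least (\<lambda>i. code_drop i c = 0) (Suc c)"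

definition code_take :: "nat \<Rightarrow> nat \<Rightarrow> nat" where
  "code_take c j = list_encode (map (code_nth c) [0..<j])"

lemma code_drop_list_encode: "code_drop i (list_encode xs) = list_encode (drop i xs)"
proof (induction i)
  case (Suc i)
  then show ?case
    by (cases "drop i xs")
      (auto simp: code_drop_def code_tl_def drop_Suc drop_tl tl_drop[symmetric])
qed (simp add: code_drop_def)

lemma code_nth_list_encode: "i < length xs \<Longrightarrow> code_nth (list_encode xs) i = xs ! i"
  by (simp add: code_nth_def code_hd_def code_drop_list_encode Cons_nth_drop_Suc[symmetric])

lemma code_length_list_encode: "code_length (list_encode xs) = length xs"
proof -
  have "length xs \<le> list_encode xs"
    by (induction xs) (auto intro: order.trans[OF _ le_prod_encode_2])
  moreover have "list_encode (drop i xs) = 0 \<longleftrightarrow> length xs \<le> i" for i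
    by (metis drop_eq_Nil list_encode.simps(1) list_encode_eq)
  ultimately show ?thesis
    unfolding code_length_def bounded_least_eq code_drop_list_encode
    by (auto intro!: Least_equality)
qed

lemma code_length_prefix_code [simp]: "code_length (prefix_code p k) = k"
  by (simp add: prefix_code_def code_length_list_encode)

lemma code_nth_prefix_code [simp]: "i < k \<Longrightarrow> code_nth (prefix_code p k) i = p i"
  by (simp add: prefix_code_def code_nth_list_encode)

lemma code_take_prefix_code [simp]: "j \<le> k \<Longrightarrow> code_take (prefix_code p k) j = prefix_code p j"
  unfolding code_take_def prefix_code_def[of p j] by (simp add: list_encode_eq)

lemma prefix_code_cong: "(\<And>i. i < j \<Longrightarrow> p i = p' i) \<Longrightarrow> prefix_code p j = prefix_code p' j"
  by (simp add: prefix_code_def list_encode_eq)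

lemma prim_rec_code_hd_tl:
  assumes "prim_rec a"
  shows "prim_rec (\<lambda>xs. code_hd (a xs))" "prim_rec (\<lambda>xs. code_tl (a xs))"
  unfolding code_hd_def code_tl_def
  by (intro prim_rec_if prim_rec_pred_eq prim_rec_prod_decode prim_rec_minus_one prim_rec_const
      assms)+

lemma prim_rec_code_drop:
  assumes "prim_rec a" and "prim_rec b"
  shows "prim_rec (\<lambda>xs. code_drop (a xs) (b xs))"
proof -
  have "prim_rec3 (\<lambda>a b c. a)" "prim_rec5 (\<lambda>n r a b c. code_tl r)"
    by (intro prim_recI prim_rec_code_hd_tl prim_rec_arg)+
  moreover have "(code_tl ^^ i) c = rec_nat c (\<lambda>n r. code_tl r) i" for i c
    by (induction i) auto
  ultimately show ?thesis
    using prim_rec_rec_nat3[OF _ _ assms prim_rec_zero prim_rec_zero] by (simp add: code_drop_def)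
qed

lemma prim_rec_code_nth:
  "prim_rec a \<Longrightarrow> prim_rec b \<Longrightarrow> prim_rec (\<lambda>xs. code_nth (a xs) (b xs))"
  unfolding code_nth_def by (intro prim_rec_code_hd_tl prim_rec_code_drop)

lemma prim_rec_code_length:
  assumes "prim_rec a"
  shows "prim_rec (\<lambda>xs. code_length (a xs))"
proof -
  have "prim_rec_pred4 (\<lambda>i c b d. code_drop i c = 0)"
    by (intro prim_rec_pred4I prim_rec_pred_eq prim_rec_code_drop prim_rec_arg prim_rec_const)
  from prim_rec_bounded_least[OF this prim_rec_Suc[OF assms] assms prim_rec_zero prim_rec_zero]
  show ?thesis
    unfolding code_length_def .
qed

lemma prim_rec_list_encode_map:
  assumes "prim_rec3 h" and "prim_rec k" and "prim_rec a" and "prim_rec b"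
  shows "prim_rec (\<lambda>xs. list_encode (map (\<lambda>i. h i (a xs) (b xs)) [0..<k xs]))"
proof -
  \<comment> \<open>the list is built from its last element backwards, \<open>d\<close> counting the elements built so far\<close>
  define build where "build k a b d = rec_nat 0 (\<lambda>n r. Suc (prod_encode (h (k - Suc n) a b, r))) d"
    for k a b d
  have "build k a b d = list_encode (map (\<lambda>i. h i a b) [k - d..<k])" if "d \<le> k" for k a b d
    using that
  proof (induction d)
    case (Suc d)
    then have "[k - Suc d..<k] = (k - Suc d) # [k - d..<k]"
      by (simp add: Suc_diff_Suc upt_conv_Cons)
    then show ?case using Suc by (simp add: build_def)
  qed (simp add: build_def)
  moreover have "prim_rec3 (\<lambda>a b c. 0)"
    and "prim_rec5 (\<lambda>n r k a b. Suc (prod_encode (h (k - Suc n) a b, r)))"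
    by (intro prim_recI prim_rec_Suc prim_rec_prod_encode prim_rec3_apply[OF assms(1)] prim_rec_diff
        prim_rec_arg prim_rec_const)+
  from prim_rec_rec_nat3[OF this assms(2,2,3,4)]
  have "prim_rec (\<lambda>xs. build (k xs) (a xs) (b xs) (k xs))"
    by (simp add: build_def)
  ultimately show ?thesis by simp
qed

lemma prim_rec_code_take:
  assumes "prim_rec a" and "prim_rec b"
  shows "prim_rec (\<lambda>xs. code_take (a xs) (b xs))"
proof -
  have "prim_rec3 (\<lambda>i c d. code_nth c i)"
    by (intro prim_recI prim_rec_code_nth prim_rec_arg)
  from prim_rec_list_encode_map[OF this assms(2,1) prim_rec_zero] show ?thesis
    unfolding code_take_def .
qed

section \<open>Machines\<close>

text \<open>The machines of \<open>computable\<close>, with the term replaced by the function it denotes.\<close>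

definition answers_by :: "(nat \<Rightarrow> nat \<Rightarrow> nat) \<Rightarrow> baire \<Rightarrow> nat \<Rightarrow> nat \<Rightarrow> bool" where
  "answers_by \<phi> p n k \<longleftrightarrow> 0 < \<phi> n (prefix_code p k)"

definition output_by :: "(nat \<Rightarrow> nat \<Rightarrow> nat) \<Rightarrow> baire \<Rightarrow> baire" where
  "output_by \<phi> p = (\<lambda>n. \<phi> n (prefix_code p (LEAST k. answers_by \<phi> p n k)) - 1)"

definition computes :: "(nat \<Rightarrow> nat \<Rightarrow> nat) \<Rightarrow> (baire \<Rightarrow> baire option) \<Rightarrow> bool" where
  "computes \<phi> F \<longleftrightarrow>
    (\<forall>p q. F p = Some q \<longrightarrow> (\<forall>n. \<exists>k. answers_by \<phi> p n k) \<and> q = output_by \<phi> p)"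

lemma computable_iff_computes: "computable F \<longleftrightarrow> (\<exists>\<phi>. prim_rec2 \<phi> \<and> computes \<phi> F)"
proof
  assume "computable F"
  then obtain M where M: "\<forall>p q. F p = Some q \<longrightarrow> machine_total_on M p \<and> q = machine_out M p"
    unfolding computable_def by blast
  have "prim_rec (peval M)"
    unfolding prim_rec_def by blast
  from prim_rec_compose[OF this, of "[\<lambda>xs. arg 0 xs, \<lambda>xs. arg 1 xs]"]
  have "prim_rec2 (\<lambda>n c. peval M [n, c])"
    by (simp add: prim_rec2_def prim_rec_arg)
  moreover have "computes (\<lambda>n c. peval M [n, c]) F"
    using M by (auto simp: computes_def machine_total_on_def machine_out_def answers_def
        answers_by_def output_by_def)
  ultimately show "\<exists>\<phi>. prim_rec2 \<phi> \<and> computes \<phi> F" by blast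
next
  assume "\<exists>\<phi>. prim_rec2 \<phi> \<and> computes \<phi> F"
  then obtain \<phi> t where "computes \<phi> F" and t: "peval t = (\<lambda>xs. \<phi> (arg 0 xs) (arg 1 xs))"
    by (auto simp: prim_rec2_def prim_rec_def)
  then show "computable F"
    unfolding computable_def
    by (auto simp: computes_def machine_total_on_def machine_out_def answers_def answers_by_def
        output_by_def t intro!: exI[of _ t])
qed

lemma computableI: "prim_rec2 \<phi> \<Longrightarrow> computes \<phi> F \<Longrightarrow> computable F"
  using computable_iff_computes by blast

lemma computableE:
  assumes "computable F"
  obtains \<phi> where "prim_rec2 \<phi>" and "computes \<phi> F"
  using assms computable_iff_computes by blast

lemma computesD:
  "computes \<phi> F \<Longrightarrow> F p = Some q \<Longrightarrow> (\<forall>n. \<exists>k. answers_by \<phi> p n k) \<and> q = output_by \<phi> p"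
  by (simp add: computes_def)

lemma output_by_eqI:
  assumes "\<exists>k. answers_by \<phi> p n k"
    and "\<And>k. answers_by \<phi> p n k \<Longrightarrow> \<phi> n (prefix_code p k) = Suc v"
  shows "output_by \<phi> p n = v"
  using assms(2)[OF LeastI_ex[OF assms(1)]] by (simp add: output_by_def)

lemma computesI:
  assumes "\<And>p q n. F p = Some q \<Longrightarrow> \<exists>k. answers_by \<phi> p n k"
    and "\<And>p q n k. F p = Some q \<Longrightarrow> answers_by \<phi> p n k \<Longrightarrow> \<phi> n (prefix_code p k) = Suc (q n)"
  shows "computes \<phi> F"
  unfolding computes_def
proof (intro allI impI conjI ext)
  fix p q n
  assume "F p = Some q"
  with assms show "\<exists>k. answers_by \<phi> p n k" and "q n = output_by \<phi> p n"
    by (auto intro!: output_by_eqI[symmetric])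
qed

lemma obind_Some [simp]: "obind (Some x) h = h x"
  by (simp add: obind_def)

lemma obind_eq_Some_iff: "obind a h = Some y \<longleftrightarrow> (\<exists>x. a = Some x \<and> h x = Some y)"
  by (cases a) (auto simp: obind_def)

lemma computable_pointwise:
  assumes "prim_rec1 \<iota>" and "prim_rec1 h"
  shows "computable (\<lambda>p. Some (\<lambda>n. h (p (\<iota> n))))"
proof (rule computableI)
  let ?\<phi> = "\<lambda>n c. if \<iota> n < code_length c then Suc (h (code_nth c (\<iota> n))) else 0"
  show "prim_rec2 ?\<phi>"
    by (intro prim_recI prim_rec_if prim_rec_pred_less prim_rec1_apply[OF assms(1)]
        prim_rec1_apply[OF assms(2)] prim_rec_Suc prim_rec_code_length prim_rec_code_nth
        prim_rec_arg prim_rec_const)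
  have "answers_by ?\<phi> p n k \<longleftrightarrow> \<iota> n < k" for p n k
    by (simp add: answers_by_def)
  then show "computes ?\<phi> (\<lambda>p. Some (\<lambda>n. h (p (\<iota> n))))"
    by (intro computesI) auto
qed

lemma computable_id: "computable (\<lambda>p. Some p)"
  and computable_zeros: "computable (\<lambda>p. Some (\<lambda>n. 0))"
  and computable_evens: "computable (\<lambda>p. Some (\<lambda>n. p (2 * n)))"
  and computable_odds: "computable (\<lambda>p. Some (\<lambda>n. p (2 * n + 1)))"
  and computable_Suc: "computable (\<lambda>p. Some (\<lambda>n. Suc (p n)))"
  using computable_pointwise[of "\<lambda>n. n" "\<lambda>x. x"] computable_pointwise[of "\<lambda>n. n" "\<lambda>x. 0"]
    computable_pointwise[of "\<lambda>n. 2 * n" "\<lambda>x. x"] computable_pointwise[of "\<lambda>n. 2 * n + 1" "\<lambda>x. x"]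
    computable_pointwise[of "\<lambda>n. n" Suc]
  by (simp_all add: prim_rec1_def prim_rec_arg prim_rec_const prim_rec_Suc prim_rec_add
      prim_rec_mult)

lemma computable_pairB:
  assumes "computable (\<lambda>p. Some (a p))" and "computable (\<lambda>p. Some (b p))"
  shows "computable (\<lambda>p. Some (pairB (a p) (b p)))"
proof -
  obtain \<phi>1 \<phi>2 where \<phi>: "prim_rec2 \<phi>1" "computes \<phi>1 (\<lambda>p. Some (a p))"
      "prim_rec2 \<phi>2" "computes \<phi>2 (\<lambda>p. Some (b p))"
    using assms by (meson computableE)
  let ?\<phi> = "\<lambda>n c. if even n then \<phi>1 (n div 2) c else \<phi>2 (n div 2) c"
  show ?thesis
  proof (rule computableI)
    show "prim_rec2 ?\<phi>"
      by (intro prim_recI prim_rec_if prim_rec_pred_even prim_rec2_apply[OF \<phi>(1)]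
          prim_rec2_apply[OF \<phi>(3)] prim_rec_div2 prim_rec_arg)
    have ans: "answers_by ?\<phi> p n k \<longleftrightarrow>
        (if even n then answers_by \<phi>1 p (n div 2) k else answers_by \<phi>2 p (n div 2) k)"
      and out: "output_by ?\<phi> p n =
        (if even n then output_by \<phi>1 p (n div 2) else output_by \<phi>2 p (n div 2))"
      for p n k
      by (simp_all add: answers_by_def output_by_def)
    show "computes ?\<phi> (\<lambda>p. Some (pairB (a p) (b p)))"
      unfolding computes_def
    proof (intro allI impI conjI)
      fix p q n
      assume "Some (pairB (a p) (b p)) = Some q"
      with computesD[OF \<phi>(2)] computesD[OF \<phi>(4)]
      show "\<exists>k. answers_by ?\<phi> p n k" and "q = output_by ?\<phi> p"
        by (cases "even n"; auto simp: ans out pairB_def)+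
    qed
  qed
qed

definition answer_time :: "(nat \<Rightarrow> nat \<Rightarrow> nat) \<Rightarrow> nat \<Rightarrow> nat \<Rightarrow> nat" where
  "answer_time \<phi> i c = bounded_least (\<lambda>k. 0 < \<phi> i (code_take c k)) (Suc (code_length c))"

definition answer_on :: "(nat \<Rightarrow> nat \<Rightarrow> nat) \<Rightarrow> nat \<Rightarrow> nat \<Rightarrow> nat" where
  "answer_on \<phi> i c = \<phi> i (code_take c (answer_time \<phi> i c)) - 1"

lemma answer_time_prefix_code:
  "answer_time \<phi> i (prefix_code p k) = bounded_least (answers_by \<phi> p i) (Suc k)"
  unfolding answer_time_def code_length_prefix_code
  by (rule bounded_least_cong) (simp add: answers_by_def)

lemma answer_time_prefix_code_le_iff:
  "answer_time \<phi> i (prefix_code p k) \<le> k \<longleftrightarrow> (\<exists>k'\<le>k. answers_by \<phi> p i k')"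
  using bounded_least_less_iff[of "answers_by \<phi> p i" "Suc k"]
  by (simp add: answer_time_prefix_code less_Suc_eq_le)

lemma answer_on_prefix_code:
  assumes "\<exists>k'\<le>k. answers_by \<phi> p i k'"
  shows "answer_on \<phi> i (prefix_code p k) = output_by \<phi> p i"
proof -
  have "answer_time \<phi> i (prefix_code p k) \<le> k"
    using assms by (simp add: answer_time_prefix_code_le_iff)
  moreover from this have "answer_time \<phi> i (prefix_code p k) = (LEAST k. answers_by \<phi> p i k)"
    unfolding answer_time_prefix_code by (intro bounded_least_eq_Least) simp
  ultimately show ?thesis
    unfolding answer_on_def output_by_def by simp
qed

lemma prim_rec_answer_time:
  assumes "prim_rec2 \<phi>" and "prim_rec a" and "prim_rec b"
  shows "prim_rec (\<lambda>xs. answer_time \<phi> (a xs) (b xs))"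
proof -
  have "prim_rec_pred4 (\<lambda>k i c d. 0 < \<phi> i (code_take c k))"
    by (intro prim_rec_pred4I prim_rec_pred_less prim_rec2_apply[OF assms(1)] prim_rec_code_take
        prim_rec_arg prim_rec_const)
  from prim_rec_bounded_least[OF this prim_rec_Suc[OF prim_rec_code_length[OF assms(3)]]
      assms(2,3) prim_rec_zero]
  show ?thesis
    unfolding answer_time_def .
qed

lemma prim_rec_answer_on:
  assumes "prim_rec2 \<phi>" and "prim_rec a" and "prim_rec b"
  shows "prim_rec (\<lambda>xs. answer_on \<phi> (a xs) (b xs))"
  unfolding answer_on_def
  by (intro prim_rec_minus_one prim_rec2_apply[OF assms(1)] prim_rec_code_take
      prim_rec_answer_time[OF assms(1)] assms(2,3))

text \<open>To compute \<open>F2 \<circ> F1\<close> from a prefix \<open>c\<close> of \<open>p\<close>: determine the longest run of outputs of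
  \<open>\<phi>1\<close> answered within \<open>c\<close>, and run \<open>\<phi>2\<close> on that prefix of \<open>F1 p\<close>.\<close>

definition answered_count :: "(nat \<Rightarrow> nat \<Rightarrow> nat) \<Rightarrow> nat \<Rightarrow> nat" where
  "answered_count \<phi> c = bounded_least (\<lambda>i. code_length c < answer_time \<phi> i c) (code_length c)"

definition answered_prefix :: "(nat \<Rightarrow> nat \<Rightarrow> nat) \<Rightarrow> nat \<Rightarrow> nat \<Rightarrow> nat" where
  "answered_prefix \<phi> j c = list_encode (map (\<lambda>i. answer_on \<phi> i c) [0..<j])"

definition comp_time ::
  "(nat \<Rightarrow> nat \<Rightarrow> nat) \<Rightarrow> (nat \<Rightarrow> nat \<Rightarrow> nat) \<Rightarrow> nat \<Rightarrow> nat \<Rightarrow> nat" where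
  "comp_time \<phi>1 \<phi>2 n c =
    bounded_least (\<lambda>j. 0 < \<phi>2 n (answered_prefix \<phi>1 j c)) (Suc (answered_count \<phi>1 c))"

definition comp_machine ::
  "(nat \<Rightarrow> nat \<Rightarrow> nat) \<Rightarrow> (nat \<Rightarrow> nat \<Rightarrow> nat) \<Rightarrow> nat \<Rightarrow> nat \<Rightarrow> nat" where
  "comp_machine \<phi>1 \<phi>2 n c =
    (if comp_time \<phi>1 \<phi>2 n c \<le> answered_count \<phi>1 c
     then \<phi>2 n (answered_prefix \<phi>1 (comp_time \<phi>1 \<phi>2 n c) c) else 0)"

lemma prim_rec_answered_count:
  assumes "prim_rec2 \<phi>" and "prim_rec a"
  shows "prim_rec (\<lambda>xs. answered_count \<phi> (a xs))"
proof -
  have "prim_rec_pred4 (\<lambda>i c d e. code_length c < answer_time \<phi> i c)"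
    by (intro prim_rec_pred4I prim_rec_pred_less prim_rec_answer_time[OF assms(1)]
        prim_rec_code_length prim_rec_arg)
  from prim_rec_bounded_least[OF this prim_rec_code_length[OF assms(2)] assms(2) prim_rec_zero
      prim_rec_zero]
  show ?thesis
    unfolding answered_count_def .
qed

lemma prim_rec_answered_prefix:
  assumes "prim_rec2 \<phi>" and "prim_rec a" and "prim_rec b"
  shows "prim_rec (\<lambda>xs. answered_prefix \<phi> (a xs) (b xs))"
proof -
  have "prim_rec3 (\<lambda>i c d. answer_on \<phi> i c)"
    by (intro prim_recI prim_rec_answer_on[OF assms(1)] prim_rec_arg)
  from prim_rec_list_encode_map[OF this assms(2,3) prim_rec_zero] show ?thesis
    unfolding answered_prefix_def .
qed

lemma prim_rec2_comp_machine:
  assumes "prim_rec2 \<phi>1" and "prim_rec2 \<phi>2"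
  shows "prim_rec2 (comp_machine \<phi>1 \<phi>2)"
proof -
  have "prim_rec_pred4 (\<lambda>j n c d. 0 < \<phi>2 n (answered_prefix \<phi>1 j c))"
    by (intro prim_rec_pred4I prim_rec_pred_less prim_rec2_apply[OF assms(2)]
        prim_rec_answered_prefix[OF assms(1)] prim_rec_arg prim_rec_const)
  from prim_rec_bounded_least[OF this
      prim_rec_Suc[OF prim_rec_answered_count[OF assms(1) prim_rec_arg]] prim_rec_arg prim_rec_arg
      prim_rec_zero]
  have "prim_rec (\<lambda>xs. comp_time \<phi>1 \<phi>2 (arg 0 xs) (arg 1 xs))"
    unfolding comp_time_def .
  then show ?thesis
    unfolding comp_machine_def
    by (intro prim_recI prim_rec_if prim_rec_pred_le prim_rec_answered_count[OF assms(1)]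
        prim_rec2_apply[OF assms(2)] prim_rec_answered_prefix[OF assms(1)] prim_rec_arg
        prim_rec_const)
qed

lemma answered_count_prefix_code:
  "answered_count \<phi> (prefix_code p k) = bounded_least (\<lambda>i. \<not> (\<exists>k'\<le>k. answers_by \<phi> p i k')) k"
  unfolding answered_count_def code_length_prefix_code
  by (rule bounded_least_cong) (simp add: answer_time_prefix_code_le_iff[symmetric] not_le)

lemma answered_prefix_prefix_code:
  assumes "j \<le> answered_count \<phi> (prefix_code p k)"
  shows "answered_prefix \<phi> j (prefix_code p k) = prefix_code (output_by \<phi> p) j"
proof -
  have "answer_on \<phi> i (prefix_code p k) = output_by \<phi> p i" if "i < j" for i
    using not_less_bounded_least[of i "\<lambda>i. \<not> (\<exists>k'\<le>k. answers_by \<phi> p i k')" k] that assms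
    by (intro answer_on_prefix_code) (simp add: answered_count_prefix_code)
  then show ?thesis
    unfolding answered_prefix_def prefix_code_def by (simp add: list_encode_eq)
qed

lemma answered_count_unbounded:
  assumes "\<forall>i. \<exists>k. answers_by \<phi> p i k"
  obtains k where "j \<le> answered_count \<phi> (prefix_code p k)"
proof -
  define B where "B = Max ((\<lambda>i. LEAST k. answers_by \<phi> p i k) ` {..<j})"
  have answered: "\<exists>k'\<le>max B j. answers_by \<phi> p i k'" if "i < j" for i
    using that assms LeastI_ex[of "answers_by \<phi> p i"]
    by (auto simp: B_def intro!: exI[of _ "LEAST k. answers_by \<phi> p i k"] max.coboundedI1)
  have "j \<le> answered_count \<phi> (prefix_code p (max B j))"
  proof (rule ccontr)
    let ?i = "bounded_least (\<lambda>i. \<not> (\<exists>k'\<le>max B j. answers_by \<phi> p i k')) (max B j)"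
    assume "\<not> j \<le> answered_count \<phi> (prefix_code p (max B j))"
    then have "?i < j" and "?i < max B j"
      by (auto simp: answered_count_prefix_code)
    with answered bounded_least_holds show False by blast
  qed
  then show thesis by (rule that)
qed

lemma answers_by_comp_machine:
  "answers_by (comp_machine \<phi>1 \<phi>2) p n k \<longleftrightarrow>
    (\<exists>j\<le>answered_count \<phi>1 (prefix_code p k). answers_by \<phi>2 (output_by \<phi>1 p) n j)"
  and comp_machine_prefix_code:
  "answers_by (comp_machine \<phi>1 \<phi>2) p n k \<Longrightarrow>
    comp_machine \<phi>1 \<phi>2 n (prefix_code p k) = Suc (output_by \<phi>2 (output_by \<phi>1 p) n)"
proof -
  let ?J = "answered_count \<phi>1 (prefix_code p k)"
  let ?E = "comp_time \<phi>1 \<phi>2 n (prefix_code p k)"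
  have E: "?E = bounded_least (answers_by \<phi>2 (output_by \<phi>1 p) n) (Suc ?J)"
    unfolding comp_time_def
    by (rule bounded_least_cong) (simp add: answered_prefix_prefix_code answers_by_def)
  have E_le: "?E \<le> ?J \<longleftrightarrow> (\<exists>j\<le>?J. answers_by \<phi>2 (output_by \<phi>1 p) n j)"
    using bounded_least_less_iff[of "answers_by \<phi>2 (output_by \<phi>1 p) n" "Suc ?J"]
    by (simp add: E less_Suc_eq_le)
  have ans: "answers_by (comp_machine \<phi>1 \<phi>2) p n k \<longleftrightarrow> ?E \<le> ?J"
  proof (cases "?E \<le> ?J")
    case True
    then have "bounded_least (answers_by \<phi>2 (output_by \<phi>1 p) n) (Suc ?J) < Suc ?J"
      unfolding E by simp
    then have "answers_by \<phi>2 (output_by \<phi>1 p) n ?E"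
      unfolding E by (rule bounded_least_holds)
    with True show ?thesis
      by (simp add: answers_by_def comp_machine_def answered_prefix_prefix_code)
  qed (simp add: answers_by_def comp_machine_def)
  with E_le show "answers_by (comp_machine \<phi>1 \<phi>2) p n k \<longleftrightarrow>
    (\<exists>j\<le>?J. answers_by \<phi>2 (output_by \<phi>1 p) n j)"
    by simp
  assume "answers_by (comp_machine \<phi>1 \<phi>2) p n k"
  with ans have le: "?E \<le> ?J" ..
  then have "bounded_least (answers_by \<phi>2 (output_by \<phi>1 p) n) (Suc ?J) < Suc ?J"
    unfolding E by simp
  then have least: "?E = (LEAST j. answers_by \<phi>2 (output_by \<phi>1 p) n j)"
    and answered: "answers_by \<phi>2 (output_by \<phi>1 p) n ?E"
    unfolding E by (rule bounded_least_eq_Least bounded_least_holds)+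
  have "comp_machine \<phi>1 \<phi>2 n (prefix_code p k) = \<phi>2 n (prefix_code (output_by \<phi>1 p) ?E)"
    using le by (simp add: comp_machine_def answered_prefix_prefix_code)
  also have "\<dots> = Suc (output_by \<phi>2 (output_by \<phi>1 p) n)"
    using answered unfolding output_by_def[of \<phi>2] least[symmetric] answers_by_def by simp
  finally show "comp_machine \<phi>1 \<phi>2 n (prefix_code p k) = Suc (output_by \<phi>2 (output_by \<phi>1 p) n)" .
qed

lemma computable_comp:
  assumes "computable F1" and "computable F2"
  shows "computable (\<lambda>p. obind (F1 p) F2)"
proof -
  obtain \<phi>1 \<phi>2 where \<phi>: "prim_rec2 \<phi>1" "computes \<phi>1 F1" "prim_rec2 \<phi>2" "computes \<phi>2 F2"
    using assms by (meson computableE)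
  show ?thesis
  proof (rule computableI[OF prim_rec2_comp_machine[OF \<phi>(1,3)]], rule computesI)
    fix p q n
    assume "obind (F1 p) F2 = Some q"
    then obtain q1 where "F1 p = Some q1" "F2 q1 = Some q"
      by (auto simp: obind_eq_Some_iff)
    then have total1: "\<forall>i. \<exists>k. answers_by \<phi>1 p i k" and total2: "\<forall>n. \<exists>j. answers_by \<phi>2 q1 n j"
      and q1: "q1 = output_by \<phi>1 p" and q: "q = output_by \<phi>2 q1"
      using computesD[OF \<phi>(2)] computesD[OF \<phi>(4)] by blast+
    show "\<exists>k. answers_by (comp_machine \<phi>1 \<phi>2) p n k"
    proof -
      obtain j where j: "answers_by \<phi>2 q1 n j"
        using total2 by blast
      obtain k where "j \<le> answered_count \<phi>1 (prefix_code p k)"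
        using answered_count_unbounded[OF total1] .
      with j q1 show ?thesis
        by (auto simp: answers_by_comp_machine)
    qed
    fix k
    assume "answers_by (comp_machine \<phi>1 \<phi>2) p n k"
    then show "comp_machine \<phi>1 \<phi>2 n (prefix_code p k) = Suc (q n)"
      by (simp add: comp_machine_prefix_code q q1)
  qed
qed

lemma computable_comp_total:
  "computable (\<lambda>p. Some (a p)) \<Longrightarrow> computable F \<Longrightarrow> computable (\<lambda>p. F (a p))"
  using computable_comp[of "\<lambda>p. Some (a p)" F] by simp

lemma enumerate_eq_iff_card:
  fixes Z :: "nat set"
  assumes "infinite Z"
  shows "j = enumerate Z m \<longleftrightarrow> j \<in> Z \<and> card {i. i < j \<and> i \<in> Z} = m"
proof -
  have card_below: "card {i. i < enumerate Z l \<and> i \<in> Z} = l" for l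
  proof -
    have "{i. i < enumerate Z l \<and> i \<in> Z} = enumerate Z ` {..<l}"
    proof (intro equalityI subsetI)
      fix i
      assume "i \<in> {i. i < enumerate Z l \<and> i \<in> Z}"
      moreover from this obtain l' where "enumerate Z l' = i"
        using enumerate_Ex[OF assms] by blast
      ultimately show "i \<in> enumerate Z ` {..<l}"
        using assms by auto
    qed (use assms enumerate_in_set in auto)
    moreover have "inj_on (enumerate Z) {..<l}"
      using inj_enumerate[OF assms] by (rule inj_on_subset) simp
    ultimately show ?thesis
      by (simp add: card_image)
  qed
  show ?thesis
  proof
    assume "j \<in> Z \<and> card {i. i < j \<and> i \<in> Z} = m"
    moreover from this obtain l where "enumerate Z l = j"
      using enumerate_Ex[OF assms] by blast
    ultimately show "j = enumerate Z m"
      using card_below[of l] by simp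
  qed (simp add: card_below enumerate_in_set[OF assms])
qed

lemma enumerate_UNIV_nat: "enumerate (UNIV :: nat set) m = m"
  using enumerate_eq_iff_card[of "UNIV :: nat set" m m] by simp

definition code_count_pos :: "nat \<Rightarrow> nat \<Rightarrow> nat" where
  "code_count_pos c j = rec_nat 0 (\<lambda>n r. r + (if 0 < code_nth c n then 1 else 0)) j"

lemma prim_rec_code_count_pos:
  assumes "prim_rec a" and "prim_rec b"
  shows "prim_rec (\<lambda>xs. code_count_pos (a xs) (b xs))"
proof -
  have "prim_rec3 (\<lambda>a b c. 0)" "prim_rec5 (\<lambda>n r c b d. r + (if 0 < code_nth c n then 1 else 0))"
    by (intro prim_recI prim_rec_add prim_rec_if prim_rec_pred_less prim_rec_code_nth prim_rec_arg
        prim_rec_const)+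
  from prim_rec_rec_nat3[OF this assms(2,1) prim_rec_zero prim_rec_zero] show ?thesis
    unfolding code_count_pos_def .
qed

lemma code_count_pos_prefix_code:
  "j \<le> k \<Longrightarrow> code_count_pos (prefix_code s k) j = card {i. i < j \<and> 0 < s i}"
proof (induction j)
  case (Suc j)
  have "{i. i < Suc j \<and> 0 < s i} = {i. i < j \<and> 0 < s i} \<union> (if 0 < s j then {j} else {})"
    by (auto simp: less_Suc_eq)
  with Suc show ?case
    by (simp add: code_count_pos_def)
qed (simp add: code_count_pos_def)

definition partial_minus_one :: "baire \<Rightarrow> baire option" where
  "partial_minus_one s = (if minus_one_infinite s then Some (minus_one s) else None)"

lemma computable_partial_minus_one: "computable partial_minus_one"
proof (rule computableI)
  let ?J = "\<lambda>m c. bounded_least (\<lambda>j. 0 < code_nth c j \<and> code_count_pos c j = m) (code_length c)"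
  let ?\<phi> = "\<lambda>m c. if ?J m c < code_length c then Suc (code_nth c (?J m c) - 1) else 0"
  have "prim_rec_pred4 (\<lambda>j m c d. 0 < code_nth c j \<and> code_count_pos c j = m)"
    by (intro prim_rec_pred4I prim_rec_pred_conj prim_rec_pred_less prim_rec_pred_eq
        prim_rec_code_nth prim_rec_code_count_pos prim_rec_arg prim_rec_const)
  from prim_rec_bounded_least[OF this prim_rec_code_length[OF prim_rec_arg] prim_rec_arg
      prim_rec_arg prim_rec_zero]
  have "prim_rec (\<lambda>xs. ?J (arg 0 xs) (arg 1 xs))" .
  then show "prim_rec2 ?\<phi>"
    by (intro prim_recI prim_rec_if prim_rec_pred_less prim_rec_Suc prim_rec_minus_one
        prim_rec_code_nth prim_rec_code_length prim_rec_arg prim_rec_const)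
  show "computes ?\<phi> partial_minus_one"
  proof (rule computesI)
    fix s q m k
    assume "partial_minus_one s = Some q"
    then have inf: "infinite {n. 0 < s n}" and q: "q = minus_one s"
      by (auto simp: partial_minus_one_def minus_one_infinite_def split: if_splits)
    let ?e = "enumerate {n. 0 < s n} m"
    have J: "?J m (prefix_code s k) = bounded_least (\<lambda>j. j = ?e) k" for k
      unfolding code_length_prefix_code by (rule bounded_least_cong)
        (simp add: code_count_pos_prefix_code enumerate_eq_iff_card[OF inf])
    have answers: "answers_by ?\<phi> s m k \<longleftrightarrow> ?e < k" for k
      by (simp only: answers_by_def J) (simp add: bounded_least_less_iff)
    then show "\<exists>k. answers_by ?\<phi> s m k" by blast
    assume "answers_by ?\<phi> s m k"
    then have "?e < k" by (simp add: answers)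
    moreover from this have "?J m (prefix_code s k) = ?e"
      unfolding J
      by (subst bounded_least_eq_Least) (auto simp: bounded_least_less_iff Least_equality)
    ultimately show "?\<phi> m (prefix_code s k) = Suc (q m)"
      by (simp add: q minus_one_def)
  qed
qed

text \<open>With \<open>rep_neg_two\<close>, the name \<open>exclusion_name \<phi> s\<close> denotes \<open>{0, 1}\<close> minus the bit that \<open>\<phi>\<close>
  writes at position 1 on input \<open>s\<close> (the first symbol of the \<open>C\<^sub>2\<close>-component of a pair),
  enumerated as soon as that symbol has been written.\<close>

definition exclusion_code :: "nat \<Rightarrow> nat" where
  "exclusion_code b = (if b \<le> 1 then Suc b else 0)"

definition exclusion_name :: "(nat \<Rightarrow> nat \<Rightarrow> nat) \<Rightarrow> baire \<Rightarrow> baire" where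
  "exclusion_name \<phi> s =
    (\<lambda>m. if \<exists>k\<le>m. answers_by \<phi> s 1 k then exclusion_code (output_by \<phi> s 1) else 0)"

definition exclusion_machine :: "(nat \<Rightarrow> nat \<Rightarrow> nat) \<Rightarrow> nat \<Rightarrow> nat \<Rightarrow> nat" where
  "exclusion_machine \<phi> m c =
    (if m \<le> code_length c
     then Suc (if answer_time \<phi> 1 (code_take c m) \<le> m
       then exclusion_code (answer_on \<phi> 1 (code_take c m)) else 0)
     else 0)"

lemma computable_exclusion_name:
  assumes "prim_rec2 \<phi>"
  shows "computable (\<lambda>s. Some (exclusion_name \<phi> s))"
proof (rule computableI)
  show "prim_rec2 (exclusion_machine \<phi>)"
    unfolding exclusion_machine_def exclusion_code_def
    by (intro prim_recI prim_rec_if prim_rec_pred_le prim_rec_Suc prim_rec_answer_time[OF assms]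
        prim_rec_answer_on[OF assms] prim_rec_code_take prim_rec_code_length prim_rec_arg
        prim_rec_const)
  have answers: "answers_by (exclusion_machine \<phi>) s m k \<longleftrightarrow> m \<le> k" for s m k
    by (simp add: answers_by_def exclusion_machine_def)
  show "computes (exclusion_machine \<phi>) (\<lambda>s. Some (exclusion_name \<phi> s))"
  proof (rule computesI)
    fix s q m k
    show "\<exists>k. answers_by (exclusion_machine \<phi>) s m k"
      using answers by blast
    assume "Some (exclusion_name \<phi> s) = Some q" and "answers_by (exclusion_machine \<phi>) s m k"
    then have "q = exclusion_name \<phi> s" and "m \<le> k"
      by (simp_all add: answers)
    then show "exclusion_machine \<phi> m (prefix_code s k) = Suc (q m)"
      by (cases "\<exists>k'\<le>m. answers_by \<phi> s 1 k'")
        (auto simp: exclusion_machine_def exclusion_name_def answer_time_prefix_code_le_iff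
          answer_on_prefix_code)
  qed
qed

section \<open>Eliminating the completion\<close>

lemma output_by_agree:
  assumes "answers_by \<phi> p n k" and "\<And>j. j < k \<Longrightarrow> \<not> answers_by \<phi> p n j"
    and "\<And>i. i < k \<Longrightarrow> p' i = p i"
  shows "output_by \<phi> p' n = output_by \<phi> p n"
proof -
  have "prefix_code p' j = prefix_code p j" if "j \<le> k" for j
    using that assms(3) by (intro prefix_code_cong) simp
  then have same: "answers_by \<phi> p' n j \<longleftrightarrow> answers_by \<phi> p n j" if "j \<le> k" for j
    using that by (simp add: answers_by_def)
  have "(LEAST j. answers_by \<phi> p n j) = k" "(LEAST j. answers_by \<phi> p' n j) = k"
    using assms(1,2) same by (auto intro!: Least_equality simp: not_less[symmetric])
  with \<open>\<And>j. j \<le> k \<Longrightarrow> prefix_code p' j = prefix_code p j\<close> show ?thesis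
    by (simp add: output_by_def)
qed

lemma pairB_even [simp]: "pairB a b (2 * n) = a n"
  and pairB_odd [simp]: "pairB a b (Suc (2 * n)) = b n"
  by (simp_all add: pairB_def)

lemma compl_rep_Suc:
  "compl_rep \<delta> (\<lambda>n. Suc (r n)) = (case \<delta> r of Some x \<Rightarrow> Some (Some x) | None \<Rightarrow> Some None)"
proof -
  have "{n. 0 < Suc (r n)} = UNIV" by simp
  then have "minus_one_infinite (\<lambda>n. Suc (r n))" and "minus_one (\<lambda>n. Suc (r n)) = r"
    by (simp_all add: minus_one_infinite_def minus_one_def enumerate_UNIV_nat)
  then show ?thesis by (simp add: compl_rep_def)
qed

lemma compl_rep_zeros: "compl_rep \<delta> (\<lambda>_. 0) = Some None"
  by (simp add: compl_rep_def minus_one_infinite_def)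

text \<open>A realizer of the completion of \<open>g\<close> that answers \<open>\<bottom>\<close> wherever it may; it need not be
  computable, since a Weihrauch reduction has to work for every realizer.\<close>

definition completion_realizer ::
  "(baire \<Rightarrow> 'u option) \<Rightarrow> ('u \<Rightarrow> 'v set) \<Rightarrow> (baire \<Rightarrow> baire option) \<Rightarrow> baire \<Rightarrow> baire option" where
  "completion_realizer \<delta>U g G s =
    (case compl_rep \<delta>U s of
      Some (Some u) \<Rightarrow>
        if g u \<noteq> {} then map_option (\<lambda>r n. Suc (r n)) (G (minus_one s)) else Some (\<lambda>_. 0)
    | _ \<Rightarrow> Some (\<lambda>_. 0))"

lemma realizes_completion_realizer:
  assumes "realizes G \<delta>U \<delta>V g"
  shows "realizes (completion_realizer \<delta>U g G) (compl_rep \<delta>U) (compl_rep \<delta>V) (completion g)"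
  unfolding realizes_def
proof (intro allI impI)
  fix s ou
  assume s: "compl_rep \<delta>U s = Some ou \<and> completion g ou \<noteq> {}"
  show "\<exists>q v. completion_realizer \<delta>U g G s = Some q \<and> compl_rep \<delta>V q = Some v \<and> v \<in> completion g ou"
  proof (cases "\<exists>u. ou = Some u \<and> g u \<noteq> {}")
    case True
    then obtain u where u: "ou = Some u" "g u \<noteq> {}" by blast
    with s have "\<delta>U (minus_one s) = Some u"
      by (auto simp: compl_rep_def split: if_splits option.splits)
    with assms u obtain r v where "G (minus_one s) = Some r" "\<delta>V r = Some v" "v \<in> g u"
      unfolding realizes_def by blast
    with s u show ?thesis
      by (auto simp: completion_realizer_def compl_rep_Suc completion_def)
  next
    case False
    with s show ?thesis
      by (auto simp: completion_realizer_def compl_rep_zeros completion_def split: option.splits)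
  qed
qed

lemma rep_neg_two_exclusion_name: "\<exists>A. rep_neg_two (exclusion_name \<phi> s) = Some A \<and> A \<noteq> {}"
proof -
  define c where "c = exclusion_code (output_by \<phi> s 1)"
  have two_values: "exclusion_name \<phi> s n = 0 \<or> exclusion_name \<phi> s n = c" for n
    by (simp add: exclusion_name_def c_def)
  have "c \<le> 2"
    by (simp add: exclusion_code_def c_def)
  have "exclusion_name \<phi> s n \<noteq> (if c = 1 then 2 else 1)" for n
    using two_values[of n] by (cases "c = 1") arith+
  then have "(c = 1) \<in> {b. \<forall>n. exclusion_name \<phi> s n \<noteq> (if b then 2 else 1)}"
    by simp
  moreover have "\<forall>n. exclusion_name \<phi> s n \<le> 2"
    using two_values \<open>c \<le> 2\<close> by (metis zero_le)
  then have "rep_neg_two (exclusion_name \<phi> s) =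
      Some {b. \<forall>n. exclusion_name \<phi> s n \<noteq> (if b then 2 else 1)}"
    unfolding rep_neg_two_def by (rule if_P)
  ultimately show ?thesis by blast
qed

text \<open>\<open>V s r\<close> is the input the outer functional of a reduction receives, built from the instance
  name \<open>s\<close> and the answer name \<open>r\<close>: \<open>pairB s r\<close> for \<open>\<le>\<^sub>W\<close> and \<open>r\<close> for \<open>\<le>\<^sub>s\<^sub>W\<close>.\<close>

definition zero_causal :: "(baire \<Rightarrow> baire \<Rightarrow> baire) \<Rightarrow> baire \<Rightarrow> bool" where
  "zero_causal V p \<longleftrightarrow> (\<forall>Q k i. (\<forall>m<k. Q m = 0) \<and> i < k \<longrightarrow>
    V (pairB p Q) (\<lambda>_. 0) i = V (pairB p (\<lambda>_. 0)) (\<lambda>_. 0) i)"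

text \<open>The heart of the argument: given the answer \<open>\<bottom>\<close>, \<open>H\<close> writes exactly the bit that
  \<open>exclusion_name\<close> removes from the \<open>C\<^sub>2\<close>-instance, because up to the time that bit is written
  the instance name is still all zeros, so \<open>H\<close> cannot tell the two runs apart.\<close>

lemma exclusion_name_diagonal:
  fixes V :: "baire \<Rightarrow> baire \<Rightarrow> baire" and p :: baire
  defines "s \<equiv> V (pairB p (\<lambda>_. 0)) (\<lambda>_. 0)"
  assumes H: "computes \<phi> H" and causal: "zero_causal V p"
    and answer: "H (V (pairB p (exclusion_name \<phi> s)) (\<lambda>_. 0)) = Some q"
  shows "\<exists>m. exclusion_name \<phi> s m = exclusion_code (q 1)"
proof -
  let ?Q = "exclusion_name \<phi> s"
  let ?t = "V (pairB p ?Q) (\<lambda>_. 0)"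
  have total: "\<forall>n. \<exists>k. answers_by \<phi> ?t n k" and q: "q = output_by \<phi> ?t"
    using H answer unfolding computes_def by blast+
  show ?thesis
  proof (cases "\<exists>k. answers_by \<phi> s 1 k")
    case True
    define k1 where "k1 = (LEAST k. answers_by \<phi> s 1 k)"
    have answered: "answers_by \<phi> s 1 k1"
      using True unfolding k1_def by (rule LeastI_ex)
    have first: "\<not> answers_by \<phi> s 1 j" if "j < k1" for j
      using that unfolding k1_def by (rule not_less_Least)
    have zero: "?Q m = 0" if "m < k1" for m
    proof -
      have "\<not> (\<exists>k\<le>m. answers_by \<phi> s 1 k)"
        using first that by (meson le_less_trans)
      then show ?thesis unfolding exclusion_name_def by (rule if_not_P)
    qed
    have "?t i = s i" if "i < k1" for i
      using causal[unfolded zero_causal_def, rule_format, where Q = ?Q and k = k1 and i = i]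
        zero that
      by (simp add: s_def)
    with answered first have "q 1 = output_by \<phi> s 1"
      unfolding q by (rule output_by_agree)
    moreover have "?Q k1 = exclusion_code (output_by \<phi> s 1)"
      using answered by (auto simp: exclusion_name_def)
    ultimately show ?thesis by auto
  next
    case False
    then have "?Q = (\<lambda>_. 0)"
      by (simp add: exclusion_name_def)
    then have "?t = s"
      unfolding s_def by simp
    with total False show ?thesis
      by auto
  qed
qed

lemma rep_neg_two_eq_SomeD: "rep_neg_two Q = Some A \<Longrightarrow> A = {b. \<forall>n. Q n \<noteq> (if b then 2 else 1)}"
proof -
  assume A: "rep_neg_two Q = Some A"
  then have "\<forall>n. Q n \<le> 2"
    by (simp add: rep_neg_two_def split: if_splits)
  then have "rep_neg_two Q = Some {b. \<forall>n. Q n \<noteq> (if b then 2 else 1)}"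
    unfolding rep_neg_two_def by (rule if_P)
  from trans[OF A[symmetric] this] show ?thesis
    by (rule option.inject[THEN iffD1])
qed

lemma exclusion_name_refutes_bottom:
  fixes V :: "baire \<Rightarrow> baire \<Rightarrow> baire" and p :: baire and \<phi> :: "nat \<Rightarrow> nat \<Rightarrow> nat"
  defines "Q \<equiv> exclusion_name \<phi> (V (pairB p (\<lambda>_. 0)) (\<lambda>_. 0))"
  assumes "computes \<phi> H" and "zero_causal V p"
    and "H (V (pairB p Q) (\<lambda>_. 0)) = Some w"
    and "rep_neg_two Q = Some A" and "rep_two (\<lambda>n. w (2 * n + 1)) = Some b"
  shows "b \<notin> A"
proof -
  obtain m where "Q m = exclusion_code (w 1)"
    using exclusion_name_diagonal[OF assms(2,3)] assms(4) unfolding Q_def by blast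
  moreover have "w 1 \<le> 1" and "b \<longleftrightarrow> w 1 = 1"
    using assms(6) by (auto simp: rep_two_def split: if_splits)
  ultimately have "Q m = (if b then 2 else 1)"
    by (auto simp: exclusion_code_def)
  with rep_neg_two_eq_SomeD[OF assms(5)] show ?thesis
    by blast
qed

lemma realizer_from_completion_reduction:
  fixes f :: "'x \<Rightarrow> 'y set" and g :: "'u \<Rightarrow> 'v set"
    and \<delta>X :: "baire \<Rightarrow> 'x option" and \<delta>Y :: "baire \<Rightarrow> 'y option"
    and \<delta>U :: "baire \<Rightarrow> 'u option" and \<delta>V :: "baire \<Rightarrow> 'v option"
    and V :: "baire \<Rightarrow> baire \<Rightarrow> baire" and p :: baire and \<phi> :: "nat \<Rightarrow> nat \<Rightarrow> nat"
  defines "Q \<equiv> exclusion_name \<phi> (V (pairB p (\<lambda>_. 0)) (\<lambda>_. 0))"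
  assumes H: "computes \<phi> H" and causal: "zero_causal V p"
    and reduction: "\<forall>G'. realizes G' (compl_rep \<delta>U) (compl_rep \<delta>V) (completion g) \<longrightarrow>
      realizes (\<lambda>s. obind (K s) (\<lambda>q. obind (G' q) (\<lambda>r. H (V s r))))
        (prod_rep \<delta>X rep_neg_two) (prod_rep \<delta>Y rep_two) (prob_prod f C2)"
    and G: "realizes G \<delta>U \<delta>V g"
    and x: "\<delta>X p = Some x" "f x \<noteq> {}"
  shows "\<exists>k r w y. K (pairB p Q) = Some k \<and> minus_one_infinite k \<and> G (minus_one k) = Some r \<and>
    H (V (pairB p Q) (\<lambda>n. Suc (r n))) = Some w \<and> \<delta>Y (\<lambda>n. w (2 * n)) = Some y \<and> y \<in> f x"
proof -
  let ?G' = "completion_realizer \<delta>U g G"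
  obtain A where A: "rep_neg_two Q = Some A" "A \<noteq> {}"
    unfolding Q_def using rep_neg_two_exclusion_name by blast
  then have "prod_rep \<delta>X rep_neg_two (pairB p Q) = Some (x, A)" and "prob_prod f C2 (x, A) \<noteq> {}"
    using x by (auto simp: prod_rep_def prob_prod_def C2_def)
  moreover note reduction[rule_format, OF realizes_completion_realizer[OF G], unfolded realizes_def,
      rule_format, of "pairB p Q" "(x, A)"]
  ultimately obtain k r' w y b
    where k: "K (pairB p Q) = Some k" and r': "?G' k = Some r'"
      and w: "H (V (pairB p Q) r') = Some w" and "prod_rep \<delta>Y rep_two w = Some (y, b)"
      and "(y, b) \<in> prob_prod f C2 (x, A)"
    by (fastforce simp: obind_eq_Some_iff)
  then have y: "\<delta>Y (\<lambda>n. w (2 * n)) = Some y" "y \<in> f x"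
    and b: "rep_two (\<lambda>n. w (2 * n + 1)) = Some b" "b \<in> A"
    by (auto simp: prod_rep_def prob_prod_def C2_def split: option.splits)
  show ?thesis
  proof (cases "\<exists>u. compl_rep \<delta>U k = Some (Some u) \<and> g u \<noteq> {}")
    case True
    then obtain u where u: "compl_rep \<delta>U k = Some (Some u)" "g u \<noteq> {}"
      by blast
    then have "minus_one_infinite k"
      by (auto simp: compl_rep_def split: if_splits)
    moreover obtain r where "G (minus_one k) = Some r" "r' = (\<lambda>n. Suc (r n))"
      using u r' by (auto simp: completion_realizer_def)
    ultimately show ?thesis
      using k w y by blast
  next
    case False
    then have "r' = (\<lambda>_. 0)"
      using r' by (auto simp: completion_realizer_def split: option.splits)
    with w have "H (V (pairB p Q) (\<lambda>_. 0)) = Some w"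
      by simp
    from exclusion_name_refutes_bottom[OF H causal this[unfolded Q_def] A(1)[unfolded Q_def] b(1)]
    show ?thesis
      using b(2) by blast
  qed
qed

lemma zero_causal_pairB: "zero_causal pairB p"
proof -
  have "i div 2 div 2 < k" if "i < k" for i k :: nat
    using that by linarith
  then show ?thesis
    by (auto simp: zero_causal_def pairB_def)
qed

lemma computable_instance_map:
  assumes "computable (\<lambda>p. Some (Q p))" and "computable K"
  shows "computable (\<lambda>p. obind (K (pairB p (Q p))) partial_minus_one)"
  using computable_comp[OF computable_comp_total[OF computable_pairB[OF computable_id assms(1)]
        assms(2)] computable_partial_minus_one]
  by simp

lemma weihrauch_le_of_times_C2_le_completion:
  fixes f :: "'x \<Rightarrow> 'y set" and g :: "'u \<Rightarrow> 'v set"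
    and \<delta>X :: "baire \<Rightarrow> 'x option" and \<delta>Y :: "baire \<Rightarrow> 'y option"
    and \<delta>U :: "baire \<Rightarrow> 'u option" and \<delta>V :: "baire \<Rightarrow> 'v option"
  assumes "weihrauch_le (prod_rep \<delta>X rep_neg_two) (prod_rep \<delta>Y rep_two) (prob_prod f C2)
    (compl_rep \<delta>U) (compl_rep \<delta>V) (completion g)"
  shows "weihrauch_le \<delta>X \<delta>Y f \<delta>U \<delta>V g"
proof -
  from assms obtain H K where cH: "computable H" and cK: "computable K"
    and reduction: "\<forall>G'. realizes G' (compl_rep \<delta>U) (compl_rep \<delta>V) (completion g) \<longrightarrow>
      realizes (\<lambda>s. obind (K s) (\<lambda>q. obind (G' q) (\<lambda>r. H (pairB s r))))
        (prod_rep \<delta>X rep_neg_two) (prod_rep \<delta>Y rep_two) (prob_prod f C2)"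
    unfolding weihrauch_le_def by blast
  obtain \<phi> where \<phi>: "prim_rec2 \<phi>" "computes \<phi> H"
    using cH by (rule computableE)
  define Q where "Q p = exclusion_name \<phi> (pairB (pairB p (\<lambda>_. 0)) (\<lambda>_. 0))" for p
  define K' where "K' p = obind (K (pairB p (Q p))) partial_minus_one" for p
  define H' where "H' t = obind (H (pairB (pairB (\<lambda>n. t (2 * n)) (Q (\<lambda>n. t (2 * n))))
    (\<lambda>n. Suc (t (2 * n + 1))))) (\<lambda>w. Some (\<lambda>n. w (2 * n)))" for t
  have cQ: "computable (\<lambda>p. Some (Q p))"
    using computable_comp_total[OF computable_pairB[OF
          computable_pairB[OF computable_id computable_zeros] computable_zeros]
        computable_exclusion_name[OF \<phi>(1)]]
    by (simp add: Q_def[abs_def])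
  then have "computable K'"
    unfolding K'_def[abs_def] using cK by (rule computable_instance_map)
  moreover have "computable H'"
    using computable_comp[OF computable_comp_total[OF computable_pairB[OF
          computable_pairB[OF computable_evens computable_comp_total[OF computable_evens cQ]]
          computable_comp_total[OF computable_odds computable_Suc]] cH] computable_evens]
    by (simp add: H'_def[abs_def])
  moreover have "realizes (\<lambda>p. obind (K' p) (\<lambda>q. obind (G q) (\<lambda>r. H' (pairB p r)))) \<delta>X \<delta>Y f"
    if G: "realizes G \<delta>U \<delta>V g" for G
    unfolding realizes_def
  proof (intro allI impI)
    fix p x
    assume "\<delta>X p = Some x \<and> f x \<noteq> {}"
    with realizer_from_completion_reduction[OF \<phi>(2) zero_causal_pairB reduction G]
    obtain k r w y where "K (pairB p (Q p)) = Some k" "minus_one_infinite k"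
      "G (minus_one k) = Some r" "H (pairB (pairB p (Q p)) (\<lambda>n. Suc (r n))) = Some w"
      "\<delta>Y (\<lambda>n. w (2 * n)) = Some y" "y \<in> f x"
      unfolding Q_def by blast
    then show "\<exists>q y. obind (K' p) (\<lambda>q. obind (G q) (\<lambda>r. H' (pairB p r))) = Some q \<and>
        \<delta>Y q = Some y \<and> y \<in> f x"
      by (simp add: K'_def H'_def partial_minus_one_def)
  qed
  ultimately show ?thesis
    using cH unfolding weihrauch_le_def by blast
qed

lemma zero_causal_snd: "zero_causal (\<lambda>s r. r) p"
  by (simp add: zero_causal_def)

lemma strong_weihrauch_le_of_times_C2_le_completion:
  fixes f :: "'x \<Rightarrow> 'y set" and g :: "'u \<Rightarrow> 'v set"
    and \<delta>X :: "baire \<Rightarrow> 'x option" and \<delta>Y :: "baire \<Rightarrow> 'y option"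
    and \<delta>U :: "baire \<Rightarrow> 'u option" and \<delta>V :: "baire \<Rightarrow> 'v option"
  assumes "strong_weihrauch_le (prod_rep \<delta>X rep_neg_two) (prod_rep \<delta>Y rep_two) (prob_prod f C2)
    (compl_rep \<delta>U) (compl_rep \<delta>V) (completion g)"
  shows "strong_weihrauch_le \<delta>X \<delta>Y f \<delta>U \<delta>V g"
proof -
  from assms obtain H K where cH: "computable H" and cK: "computable K"
    and reduction: "\<forall>G'. realizes G' (compl_rep \<delta>U) (compl_rep \<delta>V) (completion g) \<longrightarrow>
      realizes (\<lambda>s. obind (K s) (\<lambda>q. obind (G' q) H))
        (prod_rep \<delta>X rep_neg_two) (prod_rep \<delta>Y rep_two) (prob_prod f C2)"
    unfolding strong_weihrauch_le_def by blast
  obtain \<phi> where \<phi>: "prim_rec2 \<phi>" "computes \<phi> H"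
    using cH by (rule computableE)
  define Q where "Q = exclusion_name \<phi> (\<lambda>_. 0)"
  define K' where "K' p = obind (K (pairB p Q)) partial_minus_one" for p
  define H' where "H' r = obind (H (\<lambda>n. Suc (r n))) (\<lambda>w. Some (\<lambda>n. w (2 * n)))" for r
  have "computable (\<lambda>p. Some Q)"
    using computable_comp_total[OF computable_zeros computable_exclusion_name[OF \<phi>(1)]]
    by (simp add: Q_def)
  then have "computable K'"
    unfolding K'_def[abs_def] using cK by (rule computable_instance_map)
  moreover have "computable H'"
    using computable_comp[OF computable_comp_total[OF computable_Suc cH] computable_evens]
    by (simp add: H'_def[abs_def])
  moreover have "realizes (\<lambda>p. obind (K' p) (\<lambda>q. obind (G q) H')) \<delta>X \<delta>Y f"
    if G: "realizes G \<delta>U \<delta>V g" for G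
    unfolding realizes_def
  proof (intro allI impI)
    fix p x
    assume "\<delta>X p = Some x \<and> f x \<noteq> {}"
    with realizer_from_completion_reduction[OF \<phi>(2) zero_causal_snd reduction G]
    obtain k r w y where "K (pairB p Q) = Some k" "minus_one_infinite k" "G (minus_one k) = Some r"
      "H (\<lambda>n. Suc (r n)) = Some w" "\<delta>Y (\<lambda>n. w (2 * n)) = Some y" "y \<in> f x"
      unfolding Q_def by blast
    then show "\<exists>q y. obind (K' p) (\<lambda>q. obind (G q) H') = Some q \<and> \<delta>Y q = Some y \<and> y \<in> f x"
      by (simp add: K'_def H'_def partial_minus_one_def)
  qed
  ultimately show ?thesis
    using cH unfolding strong_weihrauch_le_def by blast
qed

theorem proposition10p3:
  fixes f :: "'x \<Rightarrow> 'y set" and g :: "'u \<Rightarrow> 'v set"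
    and \<delta>X :: "baire \<Rightarrow> 'x option" and \<delta>Y :: "baire \<Rightarrow> 'y option"
    and \<delta>U :: "baire \<Rightarrow> 'u option" and \<delta>V :: "baire \<Rightarrow> 'v option"
  assumes "representation \<delta>X" and "representation \<delta>Y"
    and "representation \<delta>U" and "representation \<delta>V"
  shows "(weihrauch_le (prod_rep \<delta>X rep_neg_two) (prod_rep \<delta>Y rep_two) (prob_prod f C2)
            (compl_rep \<delta>U) (compl_rep \<delta>V) (completion g)
          \<longrightarrow> weihrauch_le \<delta>X \<delta>Y f \<delta>U \<delta>V g)
       \<and> (strong_weihrauch_le (prod_rep \<delta>X rep_neg_two) (prod_rep \<delta>Y rep_two) (prob_prod f C2)
            (compl_rep \<delta>U) (compl_rep \<delta>V) (completion g)
          \<longrightarrow> strong_weihrauch_le \<delta>X \<delta>Y f \<delta>U \<delta>V g)"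
  using weihrauch_le_of_times_C2_le_completion strong_weihrauch_le_of_times_C2_le_completion
  by blast

end
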